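(* Let $d = 3$, $\rho \ge 0$, and let $r^{(1)}, \dots, r^{(\rho)} \in (0,1)^3$ be pairwise incomparable points whose $3\rho$ coordinates are all distinct. Then the number $\gamma$ of generators of their record-setting region equals $2\rho + 1$.
   Context: For $x,y \in \mathbb{R}^3$, $x \prec y$ means $x_j < y_j$ for all $j$, and $x \le y$ means $x_j \le y_j$ for all $j$; points are incomparable if neither is $\le$ the other. The record-setting region of points $r^{(1)},\dots,r^{(\rho)}$ is $S := \{x \in [0,1)^3 : x \not\prec r^{(i)} \text{ for all } i \in [\rho]\}$, and its generators are the minimal elements of $S$ with respect to $\le$. *)

theory Defs
  imports "HOL-Analysis.Analysis"
begin

definition strict_below :: "real^3 \<Rightarrow> real^3 \<Rightarrow> bool" where
  "strict_below x y \<longleftrightarrow> (\<forall>j. x $ j < y $ j)"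

definition weak_below :: "real^3 \<Rightarrow> real^3 \<Rightarrow> bool" where
  "weak_below x y \<longleftrightarrow> (\<forall>j. x $ j \<le> y $ j)"

definition incomparable :: "real^3 \<Rightarrow> real^3 \<Rightarrow> bool" where
  "incomparable x y \<longleftrightarrow> \<not> weak_below x y \<and> \<not> weak_below y x"

definition record_region :: "(real^3) set \<Rightarrow> (real^3) set" where
  "record_region R = {x. (\<forall>j. 0 \<le> x $ j \<and> x $ j < 1) \<and> (\<forall>r\<in>R. \<not> strict_below x r)}"

definition generators :: "(real^3) set \<Rightarrow> (real^3) set" where
  "generators S = {x \<in> S. \<forall>y\<in>S. weak_below y x \<longrightarrow> y = x}"

end

theory Submission
  imports Defs
begin

text \<open>A point of the record-setting region is a generator iff each of its positive coordinates
  equals that coordinate of a record point dominating it strictly in the other two coordinates.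
  Hence generators above the height of the lowest record \<open>p\<close> do not see \<open>p\<close>, those at its
  height are lifts of the planar generators of the other records that lie strictly below
  \<open>(p$1, p$2)\<close>, and those at height 0 are lifts of the planar generators of all records.
  In the plane, adding a point \<open>q\<close> in general position deletes exactly the generators strictly
  below \<open>q\<close> and creates two new ones, on the vertical and on the horizontal line through \<open>q\<close>;
  so each record adds exactly two generators, starting from the single generator 0.\<close>

definition corners :: "(real^3) set \<Rightarrow> (real^3) set" where
  "corners R = {x \<in> record_region R.
     \<forall>j. 0 < x$j \<longrightarrow> (\<exists>r\<in>R. x$j = r$j \<and> (\<forall>k. k \<noteq> j \<longrightarrow> x$k < r$k))}"

text \<open>Otherwise lowering \<open>x$j\<close> to the largest record coordinate \<open>r$j < x$j\<close> (or to 0)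
  would stay in the region.\<close>

lemma generator_coordinate_blocked:
  assumes fin: "finite R" and gen: "x \<in> generators (record_region R)" and pos: "0 < x$j"
  shows "\<exists>r\<in>R. x$j \<le> r$j \<and> (\<forall>k. k \<noteq> j \<longrightarrow> x$k < r$k)"
proof (rule ccontr)
  assume not_blocked: "\<not> ?thesis"
  have x_region: "x \<in> record_region R"
    and x_min: "\<And>y. y \<in> record_region R \<Longrightarrow> weak_below y x \<Longrightarrow> y = x"
    using gen unfolding generators_def by auto
  define T where "T = insert 0 ((\<lambda>r. r$j) ` {r\<in>R. r$j < x$j})"
  define t where "t = Max T"
  have T_fin: "finite T" using fin unfolding T_def by auto
  then have tT: "t \<in> T" unfolding t_def by (intro Max_in) (auto simp: T_def)
  have t_ge: "\<And>s. s \<in> T \<Longrightarrow> s \<le> t" unfolding t_def using T_fin by simp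
  have t_lt: "t < x$j" using tT pos unfolding T_def by auto
  have t0: "0 \<le> t" using t_ge T_def by simp
  define y where "y = (\<chi> k. if k = j then t else x$k)"
  have yj: "y$j = t" and yk: "\<And>k. k \<noteq> j \<Longrightarrow> y$k = x$k"
    unfolding y_def by auto
  have "y \<in> record_region R"
    unfolding record_region_def mem_Collect_eq
  proof (intro conjI allI ballI)
    fix k
    have "0 \<le> x$k" "x$k < 1" "x$j < 1" using x_region unfolding record_region_def by auto
    then show "0 \<le> y$k" "y$k < 1" using yj yk t0 t_lt by (cases "k = j"; simp)+
  next
    fix r assume r: "r \<in> R"
    show "\<not> strict_below y r"
    proof (cases "r$j < x$j")
      case True
      then have "r$j \<le> y$j" using r t_ge yj unfolding T_def by auto
      then show ?thesis unfolding strict_below_def by (auto simp: not_less)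
    next
      case False
      then obtain k where "k \<noteq> j" "\<not> x$k < r$k"
        using not_blocked r by (auto simp: not_less)
      then show ?thesis unfolding strict_below_def using yk by metis
    qed
  qed
  moreover have "weak_below y x"
    unfolding weak_below_def using yj yk t_lt by (metis less_imp_le order_refl)
  ultimately have "y = x" by (rule x_min)
  then show False using yj t_lt by simp
qed

lemma generators_subset_corners:
  assumes "finite R"
  shows "generators (record_region R) \<subseteq> corners R"
proof
  fix x assume gen: "x \<in> generators (record_region R)"
  then have x_region: "x \<in> record_region R" unfolding generators_def by simp
  have "\<exists>r\<in>R. x$j = r$j \<and> (\<forall>k. k \<noteq> j \<longrightarrow> x$k < r$k)" if pos: "0 < x$j" for j
  proof -
    obtain r where r: "r \<in> R" "x$j \<le> r$j" "\<forall>k. k \<noteq> j \<longrightarrow> x$k < r$k"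
      using generator_coordinate_blocked[OF assms gen pos] by blast
    have "\<not> strict_below x r" using x_region r(1) unfolding record_region_def by blast
    then obtain k where k: "\<not> x$k < r$k" unfolding strict_below_def by blast
    then have "k = j" using r(3) by blast
    then have "x$j = r$j" using r(2) k by simp
    then show ?thesis using r by blast
  qed
  then show "x \<in> corners R" using x_region unfolding corners_def by blast
qed

lemma corners_subset_generators: "corners R \<subseteq> generators (record_region R)"
proof
  fix x assume "x \<in> corners R"
  then have x_region: "x \<in> record_region R"
    and pinned: "\<And>j. 0 < x$j \<Longrightarrow> \<exists>r\<in>R. x$j = r$j \<and> (\<forall>k. k \<noteq> j \<longrightarrow> x$k < r$k)"
    unfolding corners_def by auto
  have "y = x" if y_region: "y \<in> record_region R" and yx: "weak_below y x" for y
  proof -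
    have "y$j = x$j" for j
    proof (cases "0 < x$j")
      case True
      then obtain r where r: "r \<in> R" "x$j = r$j" "\<forall>k. k \<noteq> j \<longrightarrow> x$k < r$k"
        using pinned by blast
      have y_le: "y$k \<le> x$k" for k using yx unfolding weak_below_def by blast
      show ?thesis
      proof (rule ccontr)
        assume "y$j \<noteq> x$j"
        then have "y$j < r$j" using y_le[of j] r(2) by simp
        then have "y$k < r$k" for k using y_le[of k] r(3) by (cases "k = j") auto
        then have "strict_below y r" unfolding strict_below_def by blast
        then show False using y_region r(1) unfolding record_region_def by blast
      qed
    next
      case False
      moreover have "0 \<le> y$j" using y_region unfolding record_region_def by blast
      moreover have "y$j \<le> x$j" using yx unfolding weak_below_def by blast
      ultimately show ?thesis by simp
    qed
    then show ?thesis by (simp add: vec_eq_iff)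
  qed
  then show "x \<in> generators (record_region R)" using x_region unfolding generators_def by blast
qed

lemma generators_record_region_eq_corners:
  "finite R \<Longrightarrow> generators (record_region R) = corners R"
  using generators_subset_corners corners_subset_generators by blast

lemma mem_corners_iff: "x \<in> corners R \<longleftrightarrow>
  (0 \<le> x$1 \<and> x$1 < 1 \<and> 0 \<le> x$2 \<and> x$2 < 1 \<and> 0 \<le> x$3 \<and> x$3 < 1) \<and>
  (\<forall>r\<in>R. \<not> (x$1 < r$1 \<and> x$2 < r$2 \<and> x$3 < r$3)) \<and>
  (0 < x$1 \<longrightarrow> (\<exists>r\<in>R. x$1 = r$1 \<and> x$2 < r$2 \<and> x$3 < r$3)) \<and>
  (0 < x$2 \<longrightarrow> (\<exists>r\<in>R. x$2 = r$2 \<and> x$1 < r$1 \<and> x$3 < r$3)) \<and>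
  (0 < x$3 \<longrightarrow> (\<exists>r\<in>R. x$3 = r$3 \<and> x$1 < r$1 \<and> x$2 < r$2))"
  unfolding corners_def record_region_def strict_below_def mem_Collect_eq forall_3
  by (simp add: conj_ac)

lemma corners_empty: "corners {} = {0}"
proof (intro set_eqI iffI)
  fix x assume "x \<in> corners {}"
  then have "0 \<le> x$j" "\<not> 0 < x$j" for j unfolding corners_def record_region_def by auto
  then have "x$j = 0" for j by (meson order.antisym not_less)
  then show "x \<in> {0}" by (simp add: vec_eq_iff)
next
  fix x :: "real^3" assume "x \<in> {0}"
  then show "x \<in> corners {}" unfolding corners_def record_region_def by simp
qed

lemma corners_height: "x \<in> corners R \<Longrightarrow> 0 < x$3 \<Longrightarrow> \<exists>r\<in>R. x$3 = r$3"
  unfolding corners_def by (auto dest: spec[where x = 3])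

lemma finite_corners:
  assumes "finite R"
  shows "finite (corners R)"
proof -
  let ?F = "insert 0 ((\<lambda>(r, j). r$j) ` (R \<times> UNIV))"
  have "corners R \<subseteq> (\<lambda>(a, b, c). vector [a, b, c]) ` (?F \<times> ?F \<times> ?F)"
  proof
    fix x assume x: "x \<in> corners R"
    have "x$j \<in> ?F" for j
    proof (cases "0 < x$j")
      case True
      then obtain r where "r \<in> R" "x$j = r$j"
        using x unfolding corners_def by (auto dest: spec[where x = j])
      then show ?thesis by (auto intro!: image_eqI[where x = "(r, j)"])
    next
      case False
      then show ?thesis using x unfolding corners_def record_region_def by (simp add: not_less order.antisym)
    qed
    moreover have "x = vector [x$1, x$2, x$3]" by (simp add: vec_eq_iff forall_3)
    ultimately show "x \<in> (\<lambda>(a, b, c). vector [a, b, c]) ` (?F \<times> ?F \<times> ?F)"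
      by (intro image_eqI[where x = "(x$1, x$2, x$3)"]) auto
  qed
  then show ?thesis by (rule finite_subset) (use assms in auto)
qed

definition planar_corners :: "(real \<times> real) set \<Rightarrow> (real \<times> real) set" where
  "planar_corners P = {y. 0 \<le> fst y \<and> fst y < 1 \<and> 0 \<le> snd y \<and> snd y < 1 \<and>
     (\<forall>z\<in>P. fst z \<le> fst y \<or> snd z \<le> snd y) \<and>
     (0 < fst y \<longrightarrow> (\<exists>z\<in>P. fst y = fst z \<and> snd y < snd z)) \<and>
     (0 < snd y \<longrightarrow> (\<exists>z\<in>P. snd y = snd z \<and> fst y < fst z))}"

lemma finite_planar_corners:
  assumes "finite P"
  shows "finite (planar_corners P)"
proof -
  let ?F = "insert 0 (fst ` P \<union> snd ` P)"
  have "planar_corners P \<subseteq> ?F \<times> ?F"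
  proof
    fix y assume y: "y \<in> planar_corners P"
    have "fst y \<in> ?F"
    proof (cases "0 < fst y")
      case True
      then obtain z where "z \<in> P" "fst y = fst z" using y unfolding planar_corners_def by blast
      then show ?thesis by simp
    qed (use y in \<open>simp add: planar_corners_def\<close>)
    moreover have "snd y \<in> ?F"
    proof (cases "0 < snd y")
      case True
      then obtain z where "z \<in> P" "snd y = snd z" using y unfolding planar_corners_def by blast
      then show ?thesis by simp
    qed (use y in \<open>simp add: planar_corners_def\<close>)
    ultimately show "y \<in> ?F \<times> ?F" by (simp only: mem_Times_iff)
  qed
  then show ?thesis by (rule finite_subset) (use assms in auto)
qed

lemma swap_mem_planar_corners_iff:
  "prod.swap y \<in> planar_corners (prod.swap ` P) \<longleftrightarrow> y \<in> planar_corners P"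
  unfolding planar_corners_def by auto

lemma planar_corners_insert_vertical:
  assumes fin: "finite P"
    and q: "0 < q1" "q1 < 1" "0 < q2" "q2 < 1"
    and not_above: "\<forall>z\<in>P. \<not> (q1 \<le> fst z \<and> q2 \<le> snd z)"
  shows "\<exists>t<q2. {y \<in> planar_corners (insert (q1, q2) P). fst y = q1} = {(q1, t)}"
proof -
  define T where "T = insert 0 (snd ` {z\<in>P. q1 < fst z})"
  define t where "t = Max T"
  have T_fin: "finite T" using fin unfolding T_def by auto
  then have tT: "t \<in> T" unfolding t_def by (intro Max_in) (auto simp: T_def)
  have t_ge: "\<And>s. s \<in> T \<Longrightarrow> s \<le> t" unfolding t_def using T_fin by simp
  have "s < q2" if "s \<in> T" for s
    using that not_above q(3) unfolding T_def by (auto simp: not_le)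
  then have t_lt: "t < q2" using tT by blast
  have t0: "0 \<le> t" using t_ge T_def by simp
  have not_below_t: "\<forall>z\<in>P. fst z \<le> q1 \<or> snd z \<le> t"
  proof
    fix z assume z: "z \<in> P"
    show "fst z \<le> q1 \<or> snd z \<le> t"
    proof (cases "q1 < fst z")
      case True
      then have "snd z \<in> T" unfolding T_def using z by blast
      then show ?thesis using t_ge by blast
    qed simp
  qed
  have t_attained: "0 < t \<longrightarrow> (\<exists>z\<in>P. t = snd z \<and> q1 < fst z)"
    using tT unfolding T_def by auto
  have corner: "(q1, t) \<in> planar_corners (insert (q1, q2) P)"
    unfolding planar_corners_def mem_Collect_eq fst_conv snd_conv
  proof (intro conjI)
    show "\<forall>z\<in>insert (q1, q2) P. fst z \<le> q1 \<or> snd z \<le> t"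
      using not_below_t by simp
    show "0 < q1 \<longrightarrow> (\<exists>z\<in>insert (q1, q2) P. q1 = fst z \<and> t < snd z)"
      using t_lt by auto
    show "0 < t \<longrightarrow> (\<exists>z\<in>insert (q1, q2) P. t = snd z \<and> q1 < fst z)"
      using t_attained by blast
  qed (use q t0 t_lt in auto)
  have unique: "y = (q1, t)" if y: "y \<in> planar_corners (insert (q1, q2) P)" "fst y = q1" for y
  proof -
    obtain b where b: "y = (q1, b)" using y(2) by (cases y) auto
    have h: "0 \<le> b" "\<forall>z\<in>P. fst z \<le> q1 \<or> snd z \<le> b"
       "0 < b \<longrightarrow> (\<exists>z\<in>insert (q1, q2) P. b = snd z \<and> q1 < fst z)"
      using y(1) unfolding b planar_corners_def by auto
    have "\<forall>s\<in>T. s \<le> b"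
    proof
      fix s assume "s \<in> T"
      then show "s \<le> b" unfolding T_def using h(1,2) by force
    qed
    then have "t \<le> b" using tT by blast
    moreover have "b \<le> t"
    proof (cases "0 < b")
      case True
      then obtain z where "z \<in> P" "b = snd z" "q1 < fst z" using h(3) by auto
      then have "b \<in> T" unfolding T_def by auto
      then show ?thesis using t_ge by auto
    qed (use t0 in simp)
    ultimately show ?thesis using b by simp
  qed
  have "{y \<in> planar_corners (insert (q1, q2) P). fst y = q1} = {(q1, t)}"
  proof (rule set_eqI)
    fix y
    show "y \<in> {y \<in> planar_corners (insert (q1, q2) P). fst y = q1} \<longleftrightarrow> y \<in> {(q1, t)}"
      using corner unique[of y] by auto
  qed
  then show ?thesis using t_lt by blast
qed

lemma planar_corners_insert_horizontal:
  assumes "finite P"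
    and "0 < q1" "q1 < 1" "0 < q2" "q2 < 1"
    and "\<forall>z\<in>P. \<not> (q1 \<le> fst z \<and> q2 \<le> snd z)"
  shows "\<exists>s<q1. {y \<in> planar_corners (insert (q1, q2) P). snd y = q2} = {(s, q2)}"
proof -
  have swapped: "\<forall>z\<in>prod.swap ` P. \<not> (q2 \<le> fst z \<and> q1 \<le> snd z)"
    using assms(6) by auto
  obtain s where s: "s < q1"
    "{y \<in> planar_corners (insert (q2, q1) (prod.swap ` P)). fst y = q2} = {(q2, s)}"
    using planar_corners_insert_vertical[OF finite_imageI[OF assms(1)] assms(4,5,2,3) swapped]
    by (elim exE conjE)
  have "y \<in> planar_corners (insert (q1, q2) P) \<and> snd y = q2 \<longleftrightarrow> y = (s, q2)" for y
  proof -
    have "y \<in> planar_corners (insert (q1, q2) P) \<and> snd y = q2 \<longleftrightarrow>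
      prod.swap y \<in> {z \<in> planar_corners (insert (q2, q1) (prod.swap ` P)). fst z = q2}"
      using swap_mem_planar_corners_iff[of y "insert (q1, q2) P"] by simp
    also have "\<dots> \<longleftrightarrow> y = (s, q2)" unfolding s(2) by (cases y) auto
    finally show ?thesis .
  qed
  then have "{y \<in> planar_corners (insert (q1, q2) P). snd y = q2} = {(s, q2)}"
    by (simp add: set_eq_iff)
  then show ?thesis using s(1) by blast
qed

lemma planar_corners_insert:
  assumes fin: "finite P"
    and q: "0 < q1" "q1 < 1" "0 < q2" "q2 < 1"
    and not_above: "\<forall>z\<in>P. \<not> (q1 \<le> fst z \<and> q2 \<le> snd z)"
    and distinct: "\<forall>z\<in>P. fst z \<noteq> q1 \<and> snd z \<noteq> q2"
  obtains s t where "s < q1" "t < q2"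
    "planar_corners (insert (q1, q2) P)
       = {y \<in> planar_corners P. \<not> (fst y < q1 \<and> snd y < q2)} \<union> {(q1, t), (s, q2)}"
    "(q1, t) \<notin> planar_corners P" "(s, q2) \<notin> planar_corners P"
proof -
  obtain t where t: "t < q2" "{y \<in> planar_corners (insert (q1, q2) P). fst y = q1} = {(q1, t)}"
    using planar_corners_insert_vertical[OF fin q not_above] by (elim exE conjE)
  obtain s where s: "s < q1" "{y \<in> planar_corners (insert (q1, q2) P). snd y = q2} = {(s, q2)}"
    using planar_corners_insert_horizontal[OF fin q not_above] by (elim exE conjE)
  have vert: "y \<in> planar_corners (insert (q1, q2) P) \<and> fst y = q1 \<longleftrightarrow> y = (q1, t)" for y
    using t(2) by (metis (mono_tags, lifting) mem_Collect_eq singletonD singletonI)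
  have horiz: "y \<in> planar_corners (insert (q1, q2) P) \<and> snd y = q2 \<longleftrightarrow> y = (s, q2)" for y
    using s(2) by (metis (mono_tags, lifting) mem_Collect_eq singletonD singletonI)
  have not_old: "y \<notin> planar_corners P" if "fst y = q1 \<or> snd y = q2" for y
    using that distinct q unfolding planar_corners_def by auto
  have "y \<in> planar_corners (insert (q1, q2) P) \<longleftrightarrow>
    y \<in> {y \<in> planar_corners P. \<not> (fst y < q1 \<and> snd y < q2)} \<union> {(q1, t), (s, q2)}" for y
  proof (cases "fst y = q1 \<or> snd y = q2")
    case True
    have "y \<in> planar_corners (insert (q1, q2) P) \<longleftrightarrow> y = (q1, t) \<or> y = (s, q2)"
      using True vert[of y] horiz[of y] s(1) t(1) by auto
    then show ?thesis using not_old[OF True] by simp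
  next
    case False
    then have "y \<noteq> (q1, t)" "y \<noteq> (s, q2)" by auto
    moreover have "y \<in> planar_corners (insert (q1, q2) P) \<longleftrightarrow>
        y \<in> planar_corners P \<and> \<not> (fst y < q1 \<and> snd y < q2)"
      using False unfolding planar_corners_def by auto
    ultimately show ?thesis by simp
  qed
  then have "planar_corners (insert (q1, q2) P)
       = {y \<in> planar_corners P. \<not> (fst y < q1 \<and> snd y < q2)} \<union> {(q1, t), (s, q2)}"
    by (rule set_eqI)
  then show ?thesis by (rule that[OF s(1) t(1)]) (simp_all add: not_old)
qed

lemma card_planar_corners_insert:
  assumes "finite P"
    and "0 < q1" "q1 < 1" "0 < q2" "q2 < 1"
    and "\<forall>z\<in>P. \<not> (q1 \<le> fst z \<and> q2 \<le> snd z)"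
    and "\<forall>z\<in>P. fst z \<noteq> q1 \<and> snd z \<noteq> q2"
  shows "card (planar_corners (insert (q1, q2) P)) + card {y \<in> planar_corners P. fst y < q1 \<and> snd y < q2}
    = card (planar_corners P) + 2"
proof -
  let ?Kept = "{y \<in> planar_corners P. \<not> (fst y < q1 \<and> snd y < q2)}"
  let ?Below = "{y \<in> planar_corners P. fst y < q1 \<and> snd y < q2}"
  obtain s t where st: "s < q1" "t < q2"
    "planar_corners (insert (q1, q2) P) = ?Kept \<union> {(q1, t), (s, q2)}"
    "(q1, t) \<notin> planar_corners P" "(s, q2) \<notin> planar_corners P"
    by (rule planar_corners_insert[OF assms])
  have fin: "finite (planar_corners P)" using assms(1) by (rule finite_planar_corners)
  have "card (planar_corners (insert (q1, q2) P)) = card ?Kept + card {(q1, t), (s, q2)}"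
    unfolding st(3) using fin st(4,5) by (intro card_Un_disjoint) auto
  also have "card {(q1, t), (s, q2)} = 2" using st(1) by simp
  finally have new: "card (planar_corners (insert (q1, q2) P)) = card ?Kept + 2" .
  have "planar_corners P = ?Kept \<union> ?Below" by blast
  moreover have "card (?Kept \<union> ?Below) = card ?Kept + card ?Below"
    using fin by (intro card_Un_disjoint) auto
  ultimately have "card (planar_corners P) = card ?Kept + card ?Below" by simp
  then show ?thesis using new by simp
qed

definition lift :: "real \<Rightarrow> real \<times> real \<Rightarrow> real^3" where
  "lift h y = vector [fst y, snd y, h]"

definition proj12 :: "real^3 \<Rightarrow> real \<times> real" where
  "proj12 r = (r$1, r$2)"

lemma lift_nth [simp]: "lift h y $ 1 = fst y" "lift h y $ 2 = snd y" "lift h y $ 3 = h"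
  unfolding lift_def by simp_all

lemma inj_lift: "inj (lift h)"
  by (rule injI) (metis lift_nth(1,2) prod_eqI)

lemma level_eq_lift_image:
  assumes level: "\<And>x. x \<in> A \<longleftrightarrow> x$3 = h \<and> (x$1, x$2) \<in> B"
  shows "A = lift h ` B"
proof
  show "A \<subseteq> lift h ` B"
  proof
    fix x assume "x \<in> A"
    then have x3: "x$3 = h" and x12: "(x$1, x$2) \<in> B" using level by auto
    have "x = lift h (x$1, x$2)" using x3 by (simp add: vec_eq_iff forall_3)
    then show "x \<in> lift h ` B" using x12 by (rule image_eqI)
  qed
  show "lift h ` B \<subseteq> A"
  proof
    fix x assume "x \<in> lift h ` B"
    then obtain y where "y \<in> B" "x = lift h y" by blast
    then show "x \<in> A" using level[of x] by simp
  qed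
qed

lemma card_lift_image_Un:
  assumes "finite B" "finite A" "\<forall>x\<in>A. h < x$3"
  shows "card (lift h ` B \<union> A) = card B + card A"
proof -
  have "lift h ` B \<inter> A = {}" using assms(3) by force
  then show ?thesis
    using assms(1,2) by (simp add: card_Un_disjoint card_image inj_on_subset[OF inj_lift])
qed

lemma mem_corners_level_zero_iff:
  assumes pos: "\<forall>r\<in>R. 0 < r$3"
  shows "x \<in> corners R \<and> x$3 = 0 \<longleftrightarrow> x$3 = 0 \<and> (x$1, x$2) \<in> planar_corners (proj12 ` R)"
proof
  assume level: "x \<in> corners R \<and> x$3 = 0"
  then have coords: "0 \<le> x$1 \<and> x$1 < 1 \<and> 0 \<le> x$2 \<and> x$2 < 1"
    "\<forall>r\<in>R. \<not> (x$1 < r$1 \<and> x$2 < r$2 \<and> x$3 < r$3)"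
    "0 < x$1 \<longrightarrow> (\<exists>r\<in>R. x$1 = r$1 \<and> x$2 < r$2 \<and> x$3 < r$3)"
    "0 < x$2 \<longrightarrow> (\<exists>r\<in>R. x$2 = r$2 \<and> x$1 < r$1 \<and> x$3 < r$3)"
    unfolding mem_corners_iff by auto
  have "\<forall>r\<in>R. r$1 \<le> x$1 \<or> r$2 \<le> x$2" using coords(2) level pos by force
  moreover have "0 < x$1 \<longrightarrow> (\<exists>r\<in>R. x$1 = r$1 \<and> x$2 < r$2)"
    using coords(3) by blast
  moreover have "0 < x$2 \<longrightarrow> (\<exists>r\<in>R. x$2 = r$2 \<and> x$1 < r$1)"
    using coords(4) by blast
  ultimately show "x$3 = 0 \<and> (x$1, x$2) \<in> planar_corners (proj12 ` R)"
    using coords(1) level unfolding planar_corners_def proj12_def by auto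
next
  assume level: "x$3 = 0 \<and> (x$1, x$2) \<in> planar_corners (proj12 ` R)"
  then have coords: "0 \<le> x$1 \<and> x$1 < 1 \<and> 0 \<le> x$2 \<and> x$2 < 1"
    "\<forall>r\<in>R. r$1 \<le> x$1 \<or> r$2 \<le> x$2"
    "0 < x$1 \<longrightarrow> (\<exists>r\<in>R. x$1 = r$1 \<and> x$2 < r$2)"
    "0 < x$2 \<longrightarrow> (\<exists>r\<in>R. x$2 = r$2 \<and> x$1 < r$1)"
    unfolding planar_corners_def proj12_def by auto
  have "0 < x$1 \<longrightarrow> (\<exists>r\<in>R. x$1 = r$1 \<and> x$2 < r$2 \<and> x$3 < r$3)"
    using coords(3) level pos by auto
  moreover have "0 < x$2 \<longrightarrow> (\<exists>r\<in>R. x$2 = r$2 \<and> x$1 < r$1 \<and> x$3 < r$3)"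
    using coords(4) level pos by auto
  moreover have "\<forall>r\<in>R. \<not> (x$1 < r$1 \<and> x$2 < r$2 \<and> x$3 < r$3)"
    using coords(2) by force
  ultimately show "x \<in> corners R \<and> x$3 = 0"
    unfolding mem_corners_iff using coords(1) level by simp
qed

lemma corners_level_zero:
  assumes "\<forall>r\<in>R. 0 < r$3"
  shows "{x \<in> corners R. x$3 = 0} = lift 0 ` planar_corners (proj12 ` R)"
  using mem_corners_level_zero_iff[OF assms] by (intro level_eq_lift_image) simp

lemma mem_corners_level_lowest_iff:
  assumes above: "\<forall>r\<in>R. p$3 < r$3" and p3: "0 < p$3" "p$3 < 1"
  shows "x \<in> corners (insert p R) \<and> x$3 = p$3 \<longleftrightarrow>
     x$3 = p$3 \<and> (x$1, x$2) \<in> {y \<in> planar_corners (proj12 ` R). fst y < p$1 \<and> snd y < p$2}"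
proof
  assume level: "x \<in> corners (insert p R) \<and> x$3 = p$3"
  then have coords: "0 \<le> x$1 \<and> x$1 < 1 \<and> 0 \<le> x$2 \<and> x$2 < 1"
    "\<forall>r\<in>R. \<not> (x$1 < r$1 \<and> x$2 < r$2 \<and> x$3 < r$3)"
    "0 < x$1 \<longrightarrow> (\<exists>r\<in>insert p R. x$1 = r$1 \<and> x$2 < r$2 \<and> x$3 < r$3)"
    "0 < x$2 \<longrightarrow> (\<exists>r\<in>insert p R. x$2 = r$2 \<and> x$1 < r$1 \<and> x$3 < r$3)"
    "0 < x$3 \<longrightarrow> (\<exists>r\<in>insert p R. x$3 = r$3 \<and> x$1 < r$1 \<and> x$2 < r$2)"
    unfolding mem_corners_iff by auto
  have "\<forall>r\<in>R. r$1 \<le> x$1 \<or> r$2 \<le> x$2" using coords(2) level above by force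
  moreover have "0 < x$1 \<longrightarrow> (\<exists>r\<in>R. x$1 = r$1 \<and> x$2 < r$2)"
    using coords(3) level by auto
  moreover have "0 < x$2 \<longrightarrow> (\<exists>r\<in>R. x$2 = r$2 \<and> x$1 < r$1)"
    using coords(4) level by auto
  \<comment> \<open>only \<open>p\<close> lies at height \<open>p$3\<close>, so it is \<open>p\<close> that pins the third coordinate\<close>
  moreover have "x$1 < p$1 \<and> x$2 < p$2"
  proof -
    obtain r where r: "r \<in> insert p R" "x$3 = r$3" "x$1 < r$1" "x$2 < r$2"
      using coords(5) level p3 by auto
    have "r = p" using r(1,2) level above by force
    then show ?thesis using r by simp
  qed
  ultimately show "x$3 = p$3 \<and> (x$1, x$2) \<in> {y \<in> planar_corners (proj12 ` R). fst y < p$1 \<and> snd y < p$2}"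
    using coords(1) level unfolding planar_corners_def proj12_def by auto
next
  assume level: "x$3 = p$3 \<and> (x$1, x$2) \<in> {y \<in> planar_corners (proj12 ` R). fst y < p$1 \<and> snd y < p$2}"
  then have coords: "0 \<le> x$1 \<and> x$1 < 1 \<and> 0 \<le> x$2 \<and> x$2 < 1"
    "\<forall>r\<in>R. r$1 \<le> x$1 \<or> r$2 \<le> x$2"
    "0 < x$1 \<longrightarrow> (\<exists>r\<in>R. x$1 = r$1 \<and> x$2 < r$2)"
    "0 < x$2 \<longrightarrow> (\<exists>r\<in>R. x$2 = r$2 \<and> x$1 < r$1)"
    "x$1 < p$1" "x$2 < p$2"
    unfolding planar_corners_def proj12_def by auto
  have "0 < x$1 \<longrightarrow> (\<exists>r\<in>insert p R. x$1 = r$1 \<and> x$2 < r$2 \<and> x$3 < r$3)"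
    using coords(3) level above by auto
  moreover have "0 < x$2 \<longrightarrow> (\<exists>r\<in>insert p R. x$2 = r$2 \<and> x$1 < r$1 \<and> x$3 < r$3)"
    using coords(4) level above by auto
  moreover have "0 < x$3 \<longrightarrow> (\<exists>r\<in>insert p R. x$3 = r$3 \<and> x$1 < r$1 \<and> x$2 < r$2)"
    using coords(5,6) level by auto
  moreover have "\<forall>r\<in>insert p R. \<not> (x$1 < r$1 \<and> x$2 < r$2 \<and> x$3 < r$3)"
    using coords(2) level by force
  ultimately show "x \<in> corners (insert p R) \<and> x$3 = p$3"
    unfolding mem_corners_iff using coords(1) level p3 by simp
qed

lemma corners_level_lowest:
  assumes "\<forall>r\<in>R. p$3 < r$3" "0 < p$3" "p$3 < 1"
  shows "{x \<in> corners (insert p R). x$3 = p$3}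
    = lift (p$3) ` {y \<in> planar_corners (proj12 ` R). fst y < p$1 \<and> snd y < p$2}"
  using mem_corners_level_lowest_iff[OF assms] by (intro level_eq_lift_image) simp

lemma corners_insert_above: "p$3 < x$3 \<Longrightarrow> x \<in> corners (insert p R) \<longleftrightarrow> x \<in> corners R"
  unfolding mem_corners_iff by simp

lemma corners_split_at:
  assumes above: "\<forall>r\<in>R. c < r$3" and c: "0 \<le> c"
  shows "corners R = lift 0 ` planar_corners (proj12 ` R) \<union> {x \<in> corners R. c < x$3}"
proof -
  have R_pos: "\<forall>r\<in>R. 0 < r$3" using above c by force
  have "x$3 = 0 \<or> c < x$3" if "x \<in> corners R" for x
    using corners_height[OF that] above that unfolding mem_corners_iff by force
  then have "corners R = {x \<in> corners R. x$3 = 0} \<union> {x \<in> corners R. c < x$3}" by blast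
  then show ?thesis using corners_level_zero[OF R_pos] by simp
qed

lemma corners_insert_lowest_split:
  assumes above: "\<forall>r\<in>R. p$3 < r$3" and p3: "0 < p$3" "p$3 < 1"
  shows "corners (insert p R) = lift 0 ` planar_corners (insert (p$1, p$2) (proj12 ` R))
    \<union> (lift (p$3) ` {y \<in> planar_corners (proj12 ` R). fst y < p$1 \<and> snd y < p$2}
      \<union> {x \<in> corners R. p$3 < x$3})"
proof -
  have heights: "x$3 = 0 \<or> x$3 = p$3 \<or> p$3 < x$3" if "x \<in> corners (insert p R)" for x
    using corners_height[OF that] above that unfolding mem_corners_iff by force
  have "corners (insert p R) = {x \<in> corners (insert p R). x$3 = 0}
      \<union> ({x \<in> corners (insert p R). x$3 = p$3} \<union> {x \<in> corners (insert p R). p$3 < x$3})"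
    using heights by blast
  moreover have "\<forall>r\<in>insert p R. 0 < r$3" using above p3 by force
  ultimately show ?thesis
    using corners_level_zero[of "insert p R"] corners_level_lowest[OF above p3] corners_insert_above
    unfolding proj12_def by auto
qed

lemma card_corners_insert_lowest:
  assumes fin: "finite R"
    and above: "\<forall>r\<in>R. p$3 < r$3"
    and p: "\<forall>j. 0 < p$j \<and> p$j < 1"
    and incomp: "\<forall>r\<in>R. \<not> weak_below p r"
    and distinct: "\<forall>r\<in>R. r$1 \<noteq> p$1 \<and> r$2 \<noteq> p$2"
  shows "card (corners (insert p R)) = card (corners R) + 2"
proof -
  define P where "P = proj12 ` R"
  define Below where "Below = {y \<in> planar_corners P. fst y < p$1 \<and> snd y < p$2}"
  define Upper where "Upper = {x \<in> corners R. p$3 < x$3}"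
  have P_fin: "finite P" using fin unfolding P_def by simp
  have Below_fin: "finite Below" using finite_planar_corners[OF P_fin] unfolding Below_def by simp
  have Upper_fin: "finite Upper" using finite_corners[OF fin] unfolding Upper_def by simp
  have Upper_high: "\<forall>x\<in>Upper. p$3 < x$3" unfolding Upper_def by simp
  have Upper_pos: "\<forall>x\<in>Upper. 0 < x$3" using Upper_high p by (meson less_trans)
  have "card (corners (insert p R))
      = card (lift 0 ` planar_corners (insert (p$1, p$2) P) \<union> (lift (p$3) ` Below \<union> Upper))"
    using corners_insert_lowest_split[OF above] p unfolding P_def Below_def Upper_def by simp
  also have "\<dots> = card (planar_corners (insert (p$1, p$2) P)) + card (lift (p$3) ` Below \<union> Upper)"
    using finite_planar_corners P_fin Below_fin Upper_fin Upper_pos p by (intro card_lift_image_Un) auto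
  also have "card (lift (p$3) ` Below \<union> Upper) = card Below + card Upper"
    using Below_fin Upper_fin Upper_high by (intro card_lift_image_Un) auto
  finally have new: "card (corners (insert p R))
      = card (planar_corners (insert (p$1, p$2) P)) + card Below + card Upper" by simp
  have "card (corners R) = card (lift 0 ` planar_corners P \<union> Upper)"
    using corners_split_at[OF above] p unfolding P_def Upper_def by (simp add: less_imp_le)
  also have "\<dots> = card (planar_corners P) + card Upper"
    using finite_planar_corners[OF P_fin] Upper_fin Upper_pos by (simp add: card_lift_image_Un)
  finally have old: "card (corners R) = card (planar_corners P) + card Upper" .
  have "card (planar_corners (insert (p$1, p$2) P)) + card Below = card (planar_corners P) + 2"
    unfolding Below_def
  proof (rule card_planar_corners_insert[OF P_fin])
    show "\<forall>z\<in>P. \<not> (p$1 \<le> fst z \<and> p$2 \<le> snd z)"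
      using incomp above unfolding P_def proj12_def weak_below_def forall_3
      by (auto simp: less_imp_le)
    show "\<forall>z\<in>P. fst z \<noteq> p$1 \<and> snd z \<noteq> p$2"
      using distinct unfolding P_def proj12_def by auto
  qed (use p in auto)
  then show ?thesis using new old by simp
qed

definition general_position :: "(real^3) set \<Rightarrow> bool" where
  "general_position R \<longleftrightarrow> (\<forall>r\<in>R. \<forall>j. 0 < r$j \<and> r$j < 1) \<and>
     (\<forall>p\<in>R. \<forall>q\<in>R. p \<noteq> q \<longrightarrow> incomparable p q) \<and>
     (\<forall>p\<in>R. \<forall>q\<in>R. \<forall>i j. p$i = q$j \<longrightarrow> p = q \<and> i = j)"

lemma general_position_subset: "general_position R \<Longrightarrow> S \<subseteq> R \<Longrightarrow> general_position S"
  unfolding general_position_def by blast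

theorem card_corners:
  assumes "finite R" "general_position R"
  shows "card (corners R) = 2 * card R + 1"
  using assms
proof (induction R rule: finite_ranking_induct[where f = "\<lambda>r. - r$3"])
  case empty
  then show ?case by (simp add: corners_empty)
next
  case (insert p R)
  show ?case
  proof (cases "p \<in> R")
    case True
    then show ?thesis using insert by (simp add: insert_absorb)
  next
    case False
    have gp: "general_position (insert p R)" by fact
    then have IH: "card (corners R) = 2 * card R + 1"
      using insert.IH general_position_subset by blast
    have distinct: "\<forall>r\<in>R. \<forall>i j. r$i \<noteq> p$j"
      using gp False unfolding general_position_def by blast
    have "card (corners (insert p R)) = card (corners R) + 2"
    proof (rule card_corners_insert_lowest[OF insert.hyps(1)])
      show "\<forall>r\<in>R. p$3 < r$3"
        using insert.hyps(2) distinct by (metis neg_le_iff_le order_le_neq_trans)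
      show "\<forall>j. 0 < p$j \<and> p$j < 1" using gp unfolding general_position_def by blast
      show "\<forall>r\<in>R. \<not> weak_below p r"
      proof
        fix r assume "r \<in> R"
        then have "r \<noteq> p" using False by auto
        then show "\<not> weak_below p r"
          using gp \<open>r \<in> R\<close> unfolding general_position_def incomparable_def by auto
      qed
    qed (use distinct in blast)
    then show ?thesis using IH insert.hyps(1) False by simp
  qed
qed

lemma general_position_image:
  fixes r :: "'i \<Rightarrow> real^3"
  assumes in_open_cube: "\<forall>i\<in>I. \<forall>j. 0 < r i $ j \<and> r i $ j < 1"
    and pairwise_incomparable: "\<forall>i\<in>I. \<forall>k\<in>I. i \<noteq> k \<longrightarrow> incomparable (r i) (r k)"
    and distinct_coords: "inj_on (\<lambda>(i, j). r i $ j) (I \<times> UNIV)"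
  shows "inj_on r I" and "general_position (r ` I)"
proof -
  have coords_eq: "i = k \<and> a = b" if "r i $ a = r k $ b" "i \<in> I" "k \<in> I" for i k a b
    using inj_onD[OF distinct_coords, of "(i, a)" "(k, b)"] that by auto
  show "inj_on r I" by (rule inj_onI) (metis coords_eq)
  show "general_position (r ` I)"
    unfolding general_position_def
  proof (intro conjI)
    show "\<forall>x\<in>r ` I. \<forall>j. 0 < x$j \<and> x$j < 1" using in_open_cube by auto
    show "\<forall>x\<in>r ` I. \<forall>y\<in>r ` I. x \<noteq> y \<longrightarrow> incomparable x y"
      using pairwise_incomparable by auto
    show "\<forall>x\<in>r ` I. \<forall>y\<in>r ` I. \<forall>a b. x$a = y$b \<longrightarrow> x = y \<and> a = b"
    proof (intro ballI allI impI)
      fix x y a b assume "x \<in> r ` I" "y \<in> r ` I" and xy: "x$a = y$b"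
      then obtain i k where "i \<in> I" "k \<in> I" "x = r i" "y = r k" by blast
      then show "x = y \<and> a = b" using coords_eq[of i a k b] xy by simp
    qed
  qed
qed

theorem corollaryC:
  fixes \<rho> :: nat and r :: "nat \<Rightarrow> real^3"
  assumes in_open_cube: "\<forall>i\<in>{1..\<rho>}. \<forall>j. 0 < r i $ j \<and> r i $ j < 1"
    and pairwise_incomparable: "\<forall>i\<in>{1..\<rho>}. \<forall>k\<in>{1..\<rho>}. i \<noteq> k \<longrightarrow> incomparable (r i) (r k)"
    and distinct_coords: "inj_on (\<lambda>(i, j). r i $ j) ({1..\<rho>} \<times> (UNIV :: 3 set))"
  shows "card (generators (record_region (r ` {1..\<rho>}))) = 2 * \<rho> + 1"
proof -
  have "card (r ` {1..\<rho>}) = \<rho>"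
    using general_position_image(1)[OF assms] by (simp add: card_image)
  moreover have "card (corners (r ` {1..\<rho>})) = 2 * card (r ` {1..\<rho>}) + 1"
    using general_position_image(2)[OF assms] by (intro card_corners) simp_all
  ultimately show ?thesis by (simp add: generators_record_region_eq_corners)
qed

end
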